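(* For all $m\ge2$, $n\ge1$, $\mathrm{int}(CP_{m,n})\subseteq SCP_{m,n}\cap N^+_{m,n}$, where the interior is taken in $\mathbb{S}_{m,n}$.
   Context: $\mathbb{S}_{m,n}$ is the (finite-dimensional) space of symmetric real $m$th order $n$-dimensional tensors with its Euclidean topology. $(u^m)_{i_1\ldots i_m}=u_{i_1}\cdots u_{i_m}$. $CP_{m,n}$ is the set of $\mathcal{A}=\sum_{k=1}^r(u^{(k)})^m$ with $u^{(k)}\in\mathbb{R}^n_+$; $SCP_{m,n}$ is the set of such $\mathcal{A}$ admitting a decomposition with $\mathrm{span}\{u^{(1)},\dots,u^{(r)}\}=\mathbb{R}^n$. $N^+_{m,n}$ is the set of tensors all of whose entries are positive. *)

theory Defs
  imports "HOL-Analysis.Analysis"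
begin

text \<open>The dimension n is CARD('n) (a finite index type); vectors in R^n are real^'n.
 An m-th order tensor is a function on index lists ('n list), with entries at
 lists of length m; entries at other lists are required to be 0.\<close>

definition sym_tensors :: "nat \<Rightarrow> ('n::finite list \<Rightarrow> real) set" where
  "sym_tensors m = {A. (\<forall>is. length is \<noteq> m \<longrightarrow> A is = 0) \<and>
                       (\<forall>is js. mset is = mset js \<longrightarrow> A is = A js)}"

definition tpow :: "nat \<Rightarrow> real^'n::finite \<Rightarrow> ('n list \<Rightarrow> real)" where
  "tpow m u = (\<lambda>is. if length is = m then (\<Prod>i\<leftarrow>is. u $ i) else 0)"

definition CP :: "nat \<Rightarrow> ('n::finite list \<Rightarrow> real) set" where
  "CP m = {A. \<exists>us :: (real^'n) list. (\<forall>u\<in>set us. \<forall>i. u $ i \<ge> 0) \<and>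
                A = (\<lambda>is. \<Sum>u\<leftarrow>us. tpow m u is)}"

definition SCP :: "nat \<Rightarrow> ('n::finite list \<Rightarrow> real) set" where
  "SCP m = {A. \<exists>us :: (real^'n) list. (\<forall>u\<in>set us. \<forall>i. u $ i \<ge> 0) \<and>
                span (set us) = UNIV \<and>
                A = (\<lambda>is. \<Sum>u\<leftarrow>us. tpow m u is)}"

definition Npos :: "nat \<Rightarrow> ('n::finite list \<Rightarrow> real) set" where
  "Npos m = {A. \<forall>is. length is = m \<longrightarrow> A is > 0}"

definition tdist :: "nat \<Rightarrow> ('n::finite list \<Rightarrow> real) \<Rightarrow> ('n list \<Rightarrow> real) \<Rightarrow> real" where
  "tdist m A B = sqrt (\<Sum>is\<in>{is. length is = m}. (A is - B is)^2)"

definition sym_interior :: "nat \<Rightarrow> ('n::finite list \<Rightarrow> real) set \<Rightarrow> ('n list \<Rightarrow> real) set" where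
  "sym_interior m K = {A \<in> sym_tensors m. \<exists>e>0. \<forall>B\<in>sym_tensors m. tdist m A B < e \<longrightarrow> B \<in> K}"

end

theory Submission
  imports Defs
begin

(* An interior point A of CP may be moved a little in the direction of minus any
   symmetric tensor E without leaving CP. Since completely positive tensors are entrywise
   nonnegative, taking for E the indicator of the permutations of a fixed index list shows
   that A is positive there. Taking E = sum_i e_i^m instead gives A - d^m E = sum_k u_k^m
   with u_k >= 0, hence A = sum_k u_k^m + sum_i (d e_i)^m, a decomposition whose vectors
   span R^n. *)

lemma prod_list_mset_cong:
  assumes "mset xs = mset ys"
  shows "(\<Prod>i\<leftarrow>xs. f i) = (\<Prod>i\<leftarrow>ys. (f i :: 'a::comm_monoid_mult))"
  by (metis assms mset_map prod_mset_prod_list)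

lemma tpow_in_sym_tensors: "tpow m u \<in> sym_tensors m"
  unfolding sym_tensors_def tpow_def
  by (auto dest: mset_eq_length intro: prod_list_mset_cong)

lemma sum_in_sym_tensors:
  fixes F :: "'x \<Rightarrow> 'n::finite list \<Rightarrow> real"
  assumes "\<And>x. x \<in> S \<Longrightarrow> F x \<in> sym_tensors m"
  shows "(\<lambda>is. \<Sum>x\<in>S. F x is) \<in> sym_tensors m"
  unfolding sym_tensors_def
proof (intro CollectI conjI allI impI)
  fix "is" :: "'n list" assume "length is \<noteq> m"
  then show "(\<Sum>x\<in>S. F x is) = 0" using assms unfolding sym_tensors_def by simp
next
  fix "is" js :: "'n list" assume "mset is = mset js"
  then show "(\<Sum>x\<in>S. F x is) = (\<Sum>x\<in>S. F x js)"
    using assms unfolding sym_tensors_def by (intro sum.cong) blast+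
qed

lemma add_scaled_in_sym_tensors:
  assumes "A \<in> sym_tensors m" "E \<in> sym_tensors m"
  shows "(\<lambda>is. A is + t * E is) \<in> sym_tensors m"
  using assms unfolding sym_tensors_def mem_Collect_eq
  by (metis add.right_neutral mult_zero_right)

lemma tdist_add_scaled:
  "tdist m A (\<lambda>is. A is + t * E is) = \<bar>t\<bar> * sqrt (\<Sum>is\<in>{is. length is = m}. (E is)\<^sup>2)"
  unfolding tdist_def
  by (simp add: sum_distrib_left[symmetric] power_mult_distrib real_sqrt_mult)

lemma sym_interior_add_scaled:
  assumes "A \<in> sym_interior m K" "E \<in> sym_tensors m"
  obtains e where "e > 0" "\<And>t. \<bar>t\<bar> < e \<Longrightarrow> (\<lambda>is. A is + t * E is) \<in> K"
proof -
  from assms(1) obtain e where e: "e > 0" "A \<in> sym_tensors m"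
    "\<And>B. B \<in> sym_tensors m \<Longrightarrow> tdist m A B < e \<Longrightarrow> B \<in> K"
    unfolding sym_interior_def by auto
  define C where "C = sqrt (\<Sum>is\<in>{is. length is = m}. (E is)\<^sup>2)"
  have "C \<ge> 0" unfolding C_def by (simp add: sum_nonneg)
  show ?thesis
  proof
    show "e / (C + 1) > 0" using e(1) \<open>C \<ge> 0\<close> by simp
  next
    fix t :: real assume t: "\<bar>t\<bar> < e / (C + 1)"
    have "\<bar>t\<bar> * C \<le> \<bar>t\<bar> * (C + 1)" by (simp add: mult_left_mono)
    also have "\<dots> < e" using t \<open>C \<ge> 0\<close> by (simp add: pos_less_divide_eq)
    finally have "tdist m A (\<lambda>is. A is + t * E is) < e"
      unfolding tdist_add_scaled C_def .
    then show "(\<lambda>is. A is + t * E is) \<in> K"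
      using e(2,3) assms(2) add_scaled_in_sym_tensors by blast
  qed
qed

lemma tpow_nonneg:
  assumes "\<forall>i. u $ i \<ge> 0"
  shows "tpow m u is \<ge> 0"
  unfolding tpow_def using assms by (auto intro!: prod_list_nonneg)

lemma CP_nonneg:
  assumes "B \<in> CP m"
  shows "B is \<ge> 0"
  using assms unfolding CP_def by (auto intro!: sum_list_nonneg tpow_nonneg)

lemma tpow_scaleR: "tpow m (d *\<^sub>R u) is = d ^ m * tpow m u is"
proof -
  have "prod_list (map (($) (d *\<^sub>R u)) xs) = d ^ length xs * prod_list (map (($) u) xs)"
    for xs by (induction xs) auto
  then show ?thesis unfolding tpow_def by simp
qed

lemma span_scaled_axes:
  assumes "d \<noteq> 0"
  shows "span (range (\<lambda>i. axis i d) :: (real^'n::finite) set) = UNIV"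
proof -
  have "Basis \<subseteq> span (range (\<lambda>i. axis i d) :: (real^'n) set)"
  proof
    fix b :: "real^'n" assume "b \<in> Basis"
    then obtain i where "b = axis i 1" by (auto simp: Basis_vec_def)
    then have "b = (1/d) *\<^sub>R axis i d" using assms by (simp add: axis_def vec_eq_iff)
    then show "b \<in> span (range (\<lambda>i. axis i d))" by (simp add: span_base span_mul)
  qed
  then show ?thesis by (metis span_Basis span_minimal subspace_span top.extremum_unique)
qed

lemma sym_interior_CP_subset_Npos: "sym_interior m (CP m) \<subseteq> Npos m"
proof
  fix A :: "'n::finite list \<Rightarrow> real" assume A: "A \<in> sym_interior m (CP m)"
  show "A \<in> Npos m"
    unfolding Npos_def
  proof (intro CollectI allI impI)
    fix "is" :: "'n list" assume len: "length is = m"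
    define E where "E = (\<lambda>js. if length js = m \<and> mset js = mset is then 1 else (0::real))"
    have "E \<in> sym_tensors m"
      unfolding sym_tensors_def E_def by auto (metis mset_eq_length)+
    then obtain e where "e > 0" and e: "\<And>t. \<bar>t\<bar> < e \<Longrightarrow> (\<lambda>js. A js + t * E js) \<in> CP m"
      using sym_interior_add_scaled[OF A] by blast
    have "(\<lambda>js. A js + (- e/2) * E js) \<in> CP m" using \<open>e > 0\<close> by (intro e) simp
    from CP_nonneg[OF this, of "is"] show "A is > 0"
      using \<open>e > 0\<close> len by (simp add: E_def)
  qed
qed

lemma sym_interior_CP_subset_SCP:
  assumes "m \<ge> 1"
  shows "sym_interior m (CP m :: ('n::finite list \<Rightarrow> real) set) \<subseteq> SCP m"
proof
  fix A :: "'n list \<Rightarrow> real" assume A: "A \<in> sym_interior m (CP m)"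
  define E where "E = (\<lambda>js. \<Sum>i\<in>UNIV. tpow m (axis i (1::real) :: real^'n) js)"
  have "E \<in> sym_tensors m"
    unfolding E_def by (intro sum_in_sym_tensors tpow_in_sym_tensors)
  then obtain e where "e > 0" and e: "\<And>t. \<bar>t\<bar> < e \<Longrightarrow> (\<lambda>js. A js + t * E js) \<in> CP m"
    using sym_interior_add_scaled[OF A] by blast
  define d where "d = min 1 (e/2)"
  have "d > 0" "d \<le> 1" using \<open>e > 0\<close> by (auto simp: d_def)
  have "d ^ m \<le> d ^ 1" using \<open>d > 0\<close> \<open>d \<le> 1\<close> assms by (intro power_decreasing) auto
  then have "\<bar>- (d ^ m)\<bar> < e" using \<open>d > 0\<close> \<open>e > 0\<close> by (simp add: d_def)
  then have "(\<lambda>js. A js + (- (d ^ m)) * E js) \<in> CP m" by (rule e)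
  then obtain us :: "(real^'n) list" where us: "\<forall>u\<in>set us. \<forall>i. u $ i \<ge> 0"
    "(\<lambda>js. A js + (- (d ^ m)) * E js) = (\<lambda>js. \<Sum>u\<leftarrow>us. tpow m u js)"
    unfolding CP_def by auto
  obtain xs :: "'n list" where xs: "set xs = UNIV" "distinct xs"
    using finite_distinct_list[of "UNIV :: 'n set"] by auto
  define vs where "vs = us @ map (\<lambda>i. axis i d) xs"
  have "\<forall>u\<in>set vs. \<forall>i. u $ i \<ge> 0"
    using us(1) \<open>d > 0\<close> unfolding vs_def by (auto simp: axis_def)
  moreover have "span (set vs) = UNIV"
    using span_scaled_axes[of d] \<open>d > 0\<close> xs(1) span_mono[of "set (map (\<lambda>i. axis i d) xs)" "set vs"]
    by (auto simp: vs_def)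
  moreover have "A = (\<lambda>is. \<Sum>u\<leftarrow>vs. tpow m u is)"
  proof
    fix "is" :: "'n list"
    have "(\<Sum>u\<leftarrow>map (\<lambda>i. axis i d) xs. tpow m u is) = (\<Sum>i\<in>UNIV. tpow m (axis i d) is)"
      using xs by (simp add: o_def sum_list_distinct_conv_sum_set)
    also have "\<dots> = d ^ m * E is"
    proof -
      have "axis i d = d *\<^sub>R axis i 1" for i :: 'n by (simp add: axis_def vec_eq_iff)
      then show ?thesis unfolding E_def sum_distrib_left by (simp add: tpow_scaleR)
    qed
    finally show "A is = (\<Sum>u\<leftarrow>vs. tpow m u is)"
      using fun_cong[OF us(2), of "is"] by (simp add: vs_def)
  qed
  ultimately show "A \<in> SCP m" unfolding SCP_def by blast
qed

theorem mainTheorem13: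
  fixes m :: nat
  assumes "m \<ge> 2"
  shows "sym_interior m (CP m :: ('n::finite list \<Rightarrow> real) set) \<subseteq> SCP m \<inter> Npos m"
proof (rule Int_greatest)
  show "sym_interior m (CP m) \<subseteq> SCP m"
    using assms by (intro sym_interior_CP_subset_SCP) simp
qed (rule sym_interior_CP_subset_Npos)

end
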